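(* For any $n\in\mathbb{N}$, $A>0$ and $\lambda\in[-1,1]$, there exists $f\in C[-1,1]$, nonnegative on $[-1,1]$, such that every algebraic polynomial $P_n$ of degree $\le n$ which is nonnegative on $[-1,1]$ and satisfies $P_n(\lambda)=f(\lambda)$ obeys $$\|f-P_n\|>A\,\omega_3(f,1).$$
   Context: $\|\cdot\|$ is the sup norm on $[-1,1]$; $\omega_3(f,t)$ is the third modulus of smoothness of $f$ on $[-1,1]$. *)

theory Defs
  imports "HOL-Analysis.Analysis" "HOL-Computational_Algebra.Polynomial"
begin

definition sup_norm_I :: "(real \<Rightarrow> real) \<Rightarrow> real" where
  "sup_norm_I g = Sup ((\<lambda>x. \<bar>g x\<bar>) ` {-1..1})"

definition diff3 :: "(real \<Rightarrow> real) \<Rightarrow> real \<Rightarrow> real \<Rightarrow> real" where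
  "diff3 f h x = f (x + 3*h) - 3 * f (x + 2*h) + 3 * f (x + h) - f x"

definition omega3 :: "(real \<Rightarrow> real) \<Rightarrow> real \<Rightarrow> real" where
  "omega3 f t = Sup ((\<lambda>(x, h). \<bar>diff3 f h x\<bar>) `
      {(x, h). 0 < h \<and> h \<le> t \<and> -1 \<le> x \<and> x + 3*h \<le> 1})"

end

theory Submission
  imports Defs
begin

text \<open>
  Let \<open>d = \<plusminus>1\<close> point from \<open>lam\<close> into \<open>[-1,1]\<close> and take \<open>f = max 0 q\<close> with
  \<open>q(x) = (x - lam)\<^sup>2 - d b (x - lam)\<close> for a small \<open>b > 0\<close>. Since \<open>q\<close> is quadratic and
  \<open>0 \<le> f - q \<le> b\<^sup>2/4\<close>, the third differences of \<open>f\<close> are at most \<open>b\<^sup>2\<close>, so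
  \<open>\<omega>\<^sub>3(f,1) \<le> b\<^sup>2\<close>. A polynomial \<open>P \<ge> 0\<close> with \<open>P(lam) = f(lam) = 0\<close> has a one-sided
  minimum at \<open>lam\<close>, so \<open>d P'(lam) \<ge> 0\<close>, whereas \<open>d q'(lam) = -b\<close>; hence
  \<open>|(P - q)'(lam)| \<ge> b\<close>. On polynomials of degree \<open>\<le> n + 2\<close> the derivative at \<open>lam\<close> is
  bounded by \<open>C\<close> times the sup norm (Lagrange interpolation), so
  \<open>b \<le> C (\<parallel>f - P\<parallel> + b\<^sup>2/4)\<close>. If \<open>\<parallel>f - P\<parallel> \<le> A \<omega>\<^sub>3(f,1) \<le> A b\<^sup>2\<close>, this gives
  \<open>b \<le> C (A + 1) b\<^sup>2\<close>, which fails for \<open>b < 1 / (C (A + 1))\<close>.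
\<close>

definition lagrange_basis :: "'a::field set \<Rightarrow> 'a \<Rightarrow> 'a poly" where
  "lagrange_basis S x = smult (1 / (\<Prod>y\<in>S - {x}. x - y)) (\<Prod>y\<in>S - {x}. [:-y, 1:])"

lemma poly_lagrange_basis:
  "poly (lagrange_basis S x) z = (\<Prod>y\<in>S - {x}. z - y) / (\<Prod>y\<in>S - {x}. x - y)"
  by (simp add: lagrange_basis_def poly_prod)

lemma poly_lagrange_basis_self:
  assumes "finite S"
  shows "poly (lagrange_basis S x) x = 1"
proof -
  have "(\<Prod>y\<in>S - {x}. x - y) \<noteq> 0"
    using assms by simp
  then show ?thesis
    by (simp add: poly_lagrange_basis)
qed

lemma poly_lagrange_basis_other:
  assumes "finite S" "z \<in> S" "z \<noteq> x"
  shows "poly (lagrange_basis S x) z = 0"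
proof -
  have "(\<Prod>y\<in>S - {x}. z - y) = 0"
    using assms by (subst prod_zero_iff) auto
  then show ?thesis
    by (simp add: poly_lagrange_basis)
qed

lemma degree_lagrange_basis:
  assumes "finite S" "x \<in> S"
  shows "degree (lagrange_basis S x) < card S"
proof -
  have "degree (\<Prod>y\<in>S - {x}. [:-y, 1:]) \<le> card (S - {x})"
    using degree_prod_sum_le[of "S - {x}" "\<lambda>y. [:-y, 1:]"] assms(1) by (simp add: o_def)
  also have "\<dots> < card S"
    using assms by (rule card_Diff1_less)
  finally show ?thesis
    unfolding lagrange_basis_def by (rule le_less_trans[OF degree_smult_le])
qed

lemma lagrange_interpolation:
  assumes "finite S" "degree g < card S"
  shows "g = (\<Sum>x\<in>S. smult (poly g x) (lagrange_basis S x))"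
proof (rule poly_eqI_degree[of S])
  fix z assume "z \<in> S"
  with assms(1) have "(\<Sum>x\<in>S - {z}. poly g x * poly (lagrange_basis S x) z) = 0"
    by (intro sum.neutral) (auto simp: poly_lagrange_basis_other)
  with assms(1) \<open>z \<in> S\<close>
  show "poly g z = poly (\<Sum>x\<in>S. smult (poly g x) (lagrange_basis S x)) z"
    by (simp add: poly_sum sum.remove poly_lagrange_basis_self)
next
  show "degree (\<Sum>x\<in>S. smult (poly g x) (lagrange_basis S x)) < card S"
  proof (rule degree_sum_less)
    fix x assume "x \<in> S"
    then show "degree (smult (poly g x) (lagrange_basis S x)) < card S"
      by (rule le_less_trans[OF degree_smult_le degree_lagrange_basis[OF assms(1)]])
  qed (use assms in auto)
qed (use assms in auto)

lemma pderiv_at_bounded_by_values: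
  fixes S :: "real set"
  assumes "finite S"
  shows "\<exists>C\<ge>0. \<forall>g. degree g < card S \<longrightarrow> \<bar>poly (pderiv g) x0\<bar> \<le> C * (\<Sum>x\<in>S. \<bar>poly g x\<bar>)"
proof (intro exI conjI allI impI)
  define C where "C = (\<Sum>x\<in>S. \<bar>poly (pderiv (lagrange_basis S x)) x0\<bar>)"
  show "C \<ge> 0"
    unfolding C_def by (intro sum_nonneg) auto
  fix g :: "real poly"
  assume "degree g < card S"
  then have "g = (\<Sum>x\<in>S. smult (poly g x) (lagrange_basis S x))"
    by (rule lagrange_interpolation[OF assms])
  then have "pderiv g = pderiv (\<Sum>x\<in>S. smult (poly g x) (lagrange_basis S x))"
    by (rule arg_cong)
  also have "\<dots> = (\<Sum>x\<in>S. smult (poly g x) (pderiv (lagrange_basis S x)))"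
    using higher_pderiv_sum[of 1 "\<lambda>x. smult (poly g x) (lagrange_basis S x)" S]
    by (simp add: pderiv_smult)
  finally have "poly (pderiv g) x0 = (\<Sum>x\<in>S. poly g x * poly (pderiv (lagrange_basis S x)) x0)"
    by (simp add: poly_sum)
  also have "\<bar>\<dots>\<bar> \<le> (\<Sum>x\<in>S. \<bar>poly g x\<bar> * \<bar>poly (pderiv (lagrange_basis S x)) x0\<bar>)"
    by (rule order_trans[OF sum_abs]) (simp add: abs_mult)
  also have "\<dots> \<le> (\<Sum>x\<in>S. \<bar>poly g x\<bar> * C)"
  proof (intro sum_mono mult_left_mono)
    fix x assume "x \<in> S"
    then show "\<bar>poly (pderiv (lagrange_basis S x)) x0\<bar> \<le> C"
      unfolding C_def using assms by (intro member_le_sum) auto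
  qed simp
  also have "\<dots> = C * (\<Sum>x\<in>S. \<bar>poly g x\<bar>)"
    by (simp add: sum_distrib_left mult.commute)
  finally show "\<bar>poly (pderiv g) x0\<bar> \<le> C * (\<Sum>x\<in>S. \<bar>poly g x\<bar>)" .
qed

lemma sup_norm_I_le:
  assumes "\<And>x. x \<in> {-1..1} \<Longrightarrow> \<bar>g x\<bar> \<le> M"
  shows "sup_norm_I g \<le> M"
  unfolding sup_norm_I_def using assms by (intro cSup_least) auto

lemma abs_le_sup_norm_I:
  assumes "continuous_on {-1..1} g" "x \<in> {-1..1}"
  shows "\<bar>g x\<bar> \<le> sup_norm_I g"
proof -
  have "bdd_above ((\<lambda>x. \<bar>g x\<bar>) ` {-1..1})"
    using assms(1) by (intro bounded_imp_bdd_above compact_imp_bounded compact_continuous_image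
        continuous_intros) auto
  then show ?thesis
    unfolding sup_norm_I_def using assms(2) by (intro cSup_upper) auto
qed

lemma pderiv_at_bounded_by_sup_norm_I:
  "\<exists>C\<ge>0. \<forall>g. degree g \<le> N \<longrightarrow> \<bar>poly (pderiv g) x0\<bar> \<le> C * sup_norm_I (poly g)"
proof -
  obtain S :: "real set" where S: "finite S" "card S = Suc N" "S \<subseteq> {-1..1}"
    using infinite_arbitrarily_large[OF infinite_Icc[of "-1::real" 1]] by auto
  obtain C where "C \<ge> 0"
    and C: "\<And>g. degree g < card S \<Longrightarrow> \<bar>poly (pderiv g) x0\<bar> \<le> C * (\<Sum>x\<in>S. \<bar>poly g x\<bar>)"
    using pderiv_at_bounded_by_values[OF S(1)] by blast
  show ?thesis
  proof (intro exI[of _ "C * Suc N"] conjI allI impI)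
    fix g :: "real poly"
    assume "degree g \<le> N"
    have "(\<Sum>x\<in>S. \<bar>poly g x\<bar>) \<le> (\<Sum>x\<in>S. sup_norm_I (poly g))"
      using S(3) by (intro sum_mono abs_le_sup_norm_I) (auto intro: continuous_intros)
    then have "C * (\<Sum>x\<in>S. \<bar>poly g x\<bar>) \<le> C * Suc N * sup_norm_I (poly g)"
      using \<open>C \<ge> 0\<close> S(2) by (simp add: mult_left_mono mult.assoc)
    with C[of g] \<open>degree g \<le> N\<close> S(2)
    show "\<bar>poly (pderiv g) x0\<bar> \<le> C * Suc N * sup_norm_I (poly g)" by simp
  qed (use \<open>C \<ge> 0\<close> in simp)
qed

lemma diff3_poly_degree_le_2:
  fixes q :: "real poly"
  assumes "degree q \<le> 2"
  shows "diff3 (poly q) h x = 0"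
proof -
  have "poly q y = (\<Sum>i\<le>2. coeff q i * y ^ i)" for y
    unfolding poly_altdef using assms by (intro sum.mono_neutral_left) (auto simp: coeff_eq_0)
  then show ?thesis
    unfolding diff3_def by (simp add: numeral_2_eq_2 power2_eq_square algebra_simps)
qed

lemma abs_diff3_sub_le:
  assumes "\<And>y. 0 \<le> f y - g y" "\<And>y. f y - g y \<le> \<epsilon>"
  shows "\<bar>diff3 f h x - diff3 g h x\<bar> \<le> 4 * \<epsilon>"
  using assms[of "x + 3*h"] assms[of "x + 2*h"] assms[of "x + h"] assms[of x]
  unfolding diff3_def by (simp add: abs_le_iff)

lemma omega3_le:
  assumes "0 < t" "\<And>x h. \<bar>diff3 f h x\<bar> \<le> B"
  shows "omega3 f t \<le> B"
proof -
  have "(-1, min t (2/3)) \<in> {(x, h). 0 < h \<and> h \<le> t \<and> -1 \<le> x \<and> x + 3*h \<le> 1}"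
    using assms(1) by auto
  then have "{(x, h). 0 < h \<and> h \<le> t \<and> -1 \<le> x \<and> x + 3*h \<le> 1} \<noteq> {}"
    by blast
  then show ?thesis
    unfolding omega3_def by (intro cSup_least) (use assms(2) in auto)
qed

lemma omega3_max_0_poly:
  fixes q :: "real poly"
  assumes "degree q \<le> 2" "0 \<le> \<epsilon>" "\<And>x. - \<epsilon> \<le> poly q x" "0 < t"
  shows "omega3 (\<lambda>x. max 0 (poly q x)) t \<le> 4 * \<epsilon>"
proof (rule omega3_le[OF assms(4)])
  fix x h
  have "0 \<le> max 0 (poly q y) - poly q y" "max 0 (poly q y) - poly q y \<le> \<epsilon>" for y
    using assms(2) assms(3)[of y] by auto
  then have "\<bar>diff3 (\<lambda>x. max 0 (poly q x)) h x - diff3 (poly q) h x\<bar> \<le> 4 * \<epsilon>"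
    by (rule abs_diff3_sub_le)
  then show "\<bar>diff3 (\<lambda>x. max 0 (poly q x)) h x\<bar> \<le> 4 * \<epsilon>"
    using diff3_poly_degree_le_2[OF assms(1)] by simp
qed

lemma DERIV_nonneg_at_one_sided_min:
  fixes f :: "real \<Rightarrow> real"
  assumes "DERIV f x :> D" "0 < \<delta>" "\<And>t. t \<in> {0..\<delta>} \<Longrightarrow> f x \<le> f (x + d * t)"
  shows "0 \<le> d * D"
proof (rule ccontr)
  assume "\<not> 0 \<le> d * D"
  have "((\<lambda>t. x + d * t) has_real_derivative d) (at 0)"
    by (auto intro!: derivative_eq_intros)
  moreover have "DERIV f (x + d * 0) :> D"
    using assms(1) by simp
  ultimately have "((\<lambda>t. f (x + d * t)) has_real_derivative D * d) (at 0)"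
    by (rule DERIV_chain2[rotated])
  moreover have "D * d < 0"
    using \<open>\<not> 0 \<le> d * D\<close> by (simp add: mult.commute)
  ultimately obtain e where "0 < e" and "\<forall>h>0. h < e \<longrightarrow> f (x + d * (0 + h)) < f (x + d * 0)"
    by (blast dest: DERIV_neg_dec_right)
  then have e: "\<And>h. 0 < h \<Longrightarrow> h < e \<Longrightarrow> f (x + d * h) < f x"
    by simp
  have "min (e/2) \<delta> \<in> {0..\<delta>}"
    using \<open>0 < e\<close> assms(2) by auto
  with e[of "min (e/2) \<delta>"] assms(3) \<open>0 < e\<close> assms(2) show False
    by fastforce
qed

definition kink_poly :: "real \<Rightarrow> real \<Rightarrow> real poly" where
  "kink_poly lam s = [:-lam, 1:]^2 - smult s [:-lam, 1:]"

lemma poly_kink_poly: "poly (kink_poly lam s) x = (x - lam)^2 - s * (x - lam)"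
  by (simp add: kink_poly_def power2_eq_square algebra_simps)

lemma degree_kink_poly: "degree (kink_poly lam s) \<le> 2"
  unfolding kink_poly_def
  by (intro order_trans[OF degree_diff_le_max])
    (auto simp: degree_linear_power intro: order_trans[OF degree_smult_le])

lemma poly_kink_poly_ge: "- (s^2 / 4) \<le> poly (kink_poly lam s) x"
proof -
  have "0 \<le> (x - lam - s / 2)^2"
    by simp
  then show ?thesis
    by (simp add: poly_kink_poly power2_eq_square algebra_simps)
qed

lemma pderiv_kink_poly_at: "poly (pderiv (kink_poly lam s)) lam = - s"
  by (simp add: kink_poly_def pderiv_diff pderiv_power pderiv_smult pderiv_pCons)

definition inward_sign :: "real \<Rightarrow> real" where
  "inward_sign lam = (if lam \<ge> 0 then -1 else 1)"

lemma abs_inward_sign: "\<bar>inward_sign lam\<bar> = 1"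
  by (simp add: inward_sign_def)

lemma inward_sign_squared: "(inward_sign lam)^2 = 1"
  by (simp add: inward_sign_def)

lemma inward_sign_step:
  assumes "lam \<in> {-1..1}" "t \<in> {0..1}"
  shows "lam + inward_sign lam * t \<in> {-1..1}"
  using assms by (auto simp: inward_sign_def)

lemma kink_deviation_lower_bound:
  fixes P :: "real poly" and lam :: real
  defines "d \<equiv> inward_sign lam"
  assumes "lam \<in> {-1..1}"
    and "C \<ge> 0" and C: "\<And>g. degree g \<le> N \<Longrightarrow> \<bar>poly (pderiv g) lam\<bar> \<le> C * sup_norm_I (poly g)"
    and "2 \<le> N" "degree P \<le> N"
    and P_nonneg: "\<forall>x\<in>{-1..1}. 0 \<le> poly P x" and "poly P lam = 0"
  shows "b \<le> C * (sup_norm_I (\<lambda>x. max 0 (poly (kink_poly lam (d * b)) x) - poly P x) + b^2/4)"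
    (is "_ \<le> C * (sup_norm_I (\<lambda>x. ?f x - poly P x) + _)")
proof -
  let ?q = "kink_poly lam (d * b)"
  have "\<bar>d\<bar> = 1" "d^2 = 1"
    unfolding d_def by (rule abs_inward_sign inward_sign_squared)+
  have "0 \<le> d * poly (pderiv P) lam"
    using P_nonneg inward_sign_step[OF \<open>lam \<in> {-1..1}\<close>] \<open>poly P lam = 0\<close> unfolding d_def
    by (intro DERIV_nonneg_at_one_sided_min[OF poly_DERIV zero_less_one]) auto
  moreover have "poly (pderiv (P - ?q)) lam = poly (pderiv P) lam + d * b"
    by (simp add: pderiv_diff pderiv_kink_poly_at)
  then have "d * poly (pderiv (P - ?q)) lam = d * poly (pderiv P) lam + d^2 * b"
    by (simp add: distrib_left power2_eq_square)
  ultimately have "b \<le> d * poly (pderiv (P - ?q)) lam"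
    using \<open>d^2 = 1\<close> by simp
  also have "\<dots> \<le> \<bar>poly (pderiv (P - ?q)) lam\<bar>"
    using \<open>\<bar>d\<bar> = 1\<close> abs_ge_self[of "d * _"] by (simp add: abs_mult)
  also have "\<dots> \<le> C * sup_norm_I (poly (P - ?q))"
    using \<open>degree P \<le> N\<close> order_trans[OF degree_kink_poly \<open>2 \<le> N\<close>]
    by (intro C degree_diff_le)
  also have "\<dots> \<le> C * (sup_norm_I (\<lambda>x. ?f x - poly P x) + b^2/4)"
  proof (intro mult_left_mono sup_norm_I_le \<open>C \<ge> 0\<close>)
    fix x :: real assume "x \<in> {-1..1}"
    then have "\<bar>?f x - poly P x\<bar> \<le> sup_norm_I (\<lambda>x. ?f x - poly P x)"
      by (intro abs_le_sup_norm_I continuous_intros)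
    moreover have "- (b^2/4) \<le> poly ?q x"
      using poly_kink_poly_ge[of "d * b" lam x] \<open>d^2 = 1\<close> by (simp add: power_mult_distrib)
    then have "0 \<le> ?f x - poly ?q x" "?f x - poly ?q x \<le> b^2/4"
      by (auto simp: max_def)
    ultimately show "\<bar>poly (P - ?q) x\<bar> \<le> sup_norm_I (\<lambda>x. ?f x - poly P x) + b^2/4"
      by auto
  qed
  finally show ?thesis .
qed

lemma deviation_gt_of_slope_bound:
  fixes A C b \<Delta> :: real
  assumes "b \<le> C * (\<Delta> + b^2/4)" "0 < b" "C \<ge> 0" "C * (A + 1) * b < 1"
  shows "A * b^2 < \<Delta>"
proof (rule ccontr)
  assume "\<not> A * b^2 < \<Delta>"
  then have "\<Delta> + b^2/4 \<le> (A + 1) * b^2"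
    using zero_le_power2[of b] unfolding distrib_right by linarith
  with assms(1,3) have "b \<le> C * ((A + 1) * b^2)"
    by (meson mult_left_mono order_trans)
  also have "\<dots> = (C * (A + 1) * b) * b"
    by (simp add: power2_eq_square)
  finally show False
    using assms(2,4) by (simp add: mult_le_cancel_right1)
qed

theorem lemma3p3:
  fixes n :: nat and A lam :: real
  assumes "A > 0" and "lam \<in> {-1..1}"
  shows "\<exists>f :: real \<Rightarrow> real. continuous_on {-1..1} f \<and> (\<forall>x\<in>{-1..1}. f x \<ge> 0) \<and>
    (\<forall>P :: real poly. degree P \<le> n \<longrightarrow> (\<forall>x\<in>{-1..1}. poly P x \<ge> 0) \<longrightarrow>
        poly P lam = f lam \<longrightarrow>
        sup_norm_I (\<lambda>x. f x - poly P x) > A * omega3 f 1)"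
proof -
  obtain C where "C \<ge> 0"
    and C: "\<And>g. degree g \<le> n + 2 \<Longrightarrow> \<bar>poly (pderiv g) lam\<bar> \<le> C * sup_norm_I (poly g)"
    using pderiv_at_bounded_by_sup_norm_I[of "n + 2" lam] by blast
  define b where "b = 1 / (C * (A + 1) + 1)"
  have "0 \<le> C * (A + 1)"
    using \<open>C \<ge> 0\<close> assms(1) by simp
  then have "0 < b" "C * (A + 1) * b < 1"
    unfolding b_def by (simp_all add: divide_less_eq)
  define q where "q = kink_poly lam (inward_sign lam * b)"
  define f where "f x = max 0 (poly q x)" for x
  have "- (b^2/4) \<le> poly q x" for x
    using poly_kink_poly_ge[of "inward_sign lam * b" lam x]
    unfolding q_def by (simp add: power_mult_distrib inward_sign_squared)
  then have "omega3 f 1 \<le> b^2"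
    unfolding f_def using omega3_max_0_poly[where q = q and \<epsilon> = "b^2/4" and t = 1]
    by (simp add: q_def degree_kink_poly)
  then have omega: "A * omega3 f 1 \<le> A * b^2"
    using assms(1) by (intro mult_left_mono) auto
  show ?thesis
  proof (intro exI[of _ f] conjI ballI allI impI)
    fix P :: "real poly"
    assume "degree P \<le> n" and "\<forall>x\<in>{-1..1}. 0 \<le> poly P x" and "poly P lam = f lam"
    moreover have "f lam = 0"
      by (simp add: f_def q_def poly_kink_poly)
    ultimately have "b \<le> C * (sup_norm_I (\<lambda>x. f x - poly P x) + b^2/4)"
      unfolding f_def q_def
      by (intro kink_deviation_lower_bound[where N = "n + 2", OF assms(2) \<open>C \<ge> 0\<close> C]) auto
    then have "A * b^2 < sup_norm_I (\<lambda>x. f x - poly P x)"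
      using \<open>0 < b\<close> \<open>C \<ge> 0\<close> \<open>C * (A + 1) * b < 1\<close> by (rule deviation_gt_of_slope_bound)
    with omega show "A * omega3 f 1 < sup_norm_I (\<lambda>x. f x - poly P x)"
      by linarith
  qed (auto simp: f_def intro!: continuous_intros)
qed

end
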